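(* Let $p(z)=\sum_{i=0}^da_iz^i$ be a complex polynomial of degree $d\ge2$ such that $0$ is a periodic point of period $m_0$ with multiplier $\rho:=(p^{m_0})'(0)$, let $t_0\ge1$, $m_1:=m_0t_0$ and $b_i:=(p^{m_1-i-1})'(p^{i+1}(0))$ for $0\le i\le m_1-1$. Let $q$ be a polynomial, $\epsilon\in\mathbb{C}^*$, and for $s\in\mathbb{D}^*$ let $f(z,w):=(p(z)+s\epsilon w,q(w))$ and $g:=\phi^{-1}\circ f\circ\phi$ with $\phi(z,w)=(sz,w)$. Then for every $l\ge1$ there exists a polynomial $E_l$ in $(s,z,w)$ such that $$g^{m_1l}(z,w)=\Big(\rho^{t_0l}z+\epsilon\sum_{i=0}^{m_1-1}b_i\sum_{k=0}^{l-1}\rho^{t_0k}q^{i+(l-1-k)m_1}(w)+sE_l(s,z,w),\ q^{m_1l}(w)\Big).$$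
   Context: $\mathbb{D}^*$ is the punctured unit disc. Note $g(z,w)=(a_0s^{-1}+a_1z+\epsilon w+sE(s,z,w),q(w))$ with $E$ polynomial. *)

theory Defs
  imports "HOL-Analysis.Analysis" "HOL-Computational_Algebra.Polynomial"
begin

definition poly3 :: "(complex \<Rightarrow> complex \<Rightarrow> complex \<Rightarrow> complex) \<Rightarrow> bool" where
  "poly3 E \<longleftrightarrow> (\<exists>(n::nat) (c::nat \<Rightarrow> nat \<Rightarrow> nat \<Rightarrow> complex).
     \<forall>s z w. E s z w = (\<Sum>i\<le>n. \<Sum>j\<le>n. \<Sum>k\<le>n. c i j k * s ^ i * z ^ j * w ^ k))"

definition fmap :: "complex poly \<Rightarrow> complex poly \<Rightarrow> complex \<Rightarrow> complex \<Rightarrow> complex \<times> complex \<Rightarrow> complex \<times> complex" where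
  "fmap p q eps s = (\<lambda>(z, w). (poly p z + s * eps * w, poly q w))"

definition phi :: "complex \<Rightarrow> complex \<times> complex \<Rightarrow> complex \<times> complex" where
  "phi s = (\<lambda>(z, w). (s * z, w))"

definition phi_inv :: "complex \<Rightarrow> complex \<times> complex \<Rightarrow> complex \<times> complex" where
  "phi_inv s = (\<lambda>(z, w). (z / s, w))"

definition gmap :: "complex poly \<Rightarrow> complex poly \<Rightarrow> complex \<Rightarrow> complex \<Rightarrow> complex \<times> complex \<Rightarrow> complex \<times> complex" where
  "gmap p q eps s = phi_inv s \<circ> fmap p q eps s \<circ> phi s"

end

theory Submission
  imports Defs
begin

text \<open>Since \<open>\<phi>\<close> only rescales the first coordinate, \<open>g\<^sup>n(z,w)\<close> is \<open>f\<^sup>n(sz,w)\<close> with the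
first coordinate divided by \<open>s\<close>. Expanding that coordinate in powers of \<open>s\<close>, its constant term is
\<open>p\<^sup>n(0)\<close>, which vanishes when \<open>m\<^sub>0\<close> divides \<open>n\<close>, and its linear coefficient \<open>A\<^sub>n(z,w)\<close> obeys
\<open>A\<^sub>n\<^sub>+\<^sub>1 = p'(p\<^sup>n(0)) A\<^sub>n + \<epsilon> q\<^sup>n(w)\<close>; the rest is \<open>s\<^sup>2\<close> times a polynomial. Solving this
recursion with the chain rule and cutting the resulting sum into blocks of length \<open>m\<^sub>1\<close>, along
each of which the derivative of \<open>p\<close> on the periodic orbit of \<open>0\<close> contributes a factor
\<open>\<rho>\<^sup>t\<^sup>0\<close>, gives the formula.\<close>

text \<open>Polynomials in \<open>s, z, w\<close> are modelled as elements of \<open>\<complex>[w][z][s]\<close>: the outer variable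
is \<open>s\<close> and the innermost one \<open>w\<close>.\<close>

definition eval3 :: "complex poly poly poly \<Rightarrow> complex \<Rightarrow> complex \<Rightarrow> complex \<Rightarrow> complex" where
  "eval3 P s z w = poly (poly (poly P [:[:s:]:]) [:z:]) w"

lemma poly_eq_sum_atMost:
  fixes p :: "'a::comm_semiring_1 poly"
  shows "degree p \<le> n \<Longrightarrow> poly p x = (\<Sum>i\<le>n. coeff p i * x ^ i)"
  unfolding poly_altdef by (rule sum.mono_neutral_left) (auto simp: coeff_eq_0)

lemma finite_coeff_coeff: "finite {coeff (coeff P i) j |i j. True}"
proof -
  have "{coeff (coeff P i) j |i j. True} = (\<Union>Q\<in>range (coeff P). range (coeff Q))" by auto
  then show ?thesis by (simp add: range_coeff)
qed

lemma poly3_eval3: "poly3 (eval3 P)"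
proof -
  define n where "n = degree P + Max (degree ` range (coeff P))
     + Max (degree ` {coeff (coeff P i) j |i j. True})"
  have "poly P x = (\<Sum>i\<le>n. coeff P i * x ^ i)" for x
    by (rule poly_eq_sum_atMost) (simp add: n_def)
  moreover have "poly (coeff P i) x = (\<Sum>j\<le>n. coeff (coeff P i) j * x ^ j)" for i x
  proof (rule poly_eq_sum_atMost)
    have "finite (range (coeff P))" by (simp add: range_coeff)
    then have "degree (coeff P i) \<le> Max (degree ` range (coeff P))"
      by (intro Max_ge) auto
    then show "degree (coeff P i) \<le> n" by (simp add: n_def)
  qed
  moreover have "poly (coeff (coeff P i) j) x = (\<Sum>k\<le>n. coeff (coeff (coeff P i) j) k * x ^ k)"
    for i j x
  proof (rule poly_eq_sum_atMost)
    have "degree (coeff (coeff P i) j) \<le> Max (degree ` {coeff (coeff P i) j |i j. True})"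
      by (rule Max_ge) (use finite_coeff_coeff in auto)
    then show "degree (coeff (coeff P i) j) \<le> n" by (simp add: n_def)
  qed
  ultimately show ?thesis
    unfolding poly3_def
    by (intro exI[of _ n] exI[of _ "\<lambda>i j k. coeff (coeff (coeff P i) j) k"] allI)
      (simp add: eval3_def poly_sum sum_distrib_left sum_distrib_right mult_ac)
qed

lemma eval3_monomials:
  "eval3 (\<Sum>i\<le>n. \<Sum>j\<le>n. \<Sum>k\<le>n. [:[:[:c i j k:]:]:] * [:0, 1:] ^ i * [:[:0, 1:]:] ^ j * [:[:[:0, 1:]:]:] ^ k) s z w
    = (\<Sum>i\<le>n. \<Sum>j\<le>n. \<Sum>k\<le>n. c i j k * s ^ i * z ^ j * w ^ k)"
  by (simp add: eval3_def poly_sum mult.assoc)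

lemma poly3_iff_eval3: "poly3 E \<longleftrightarrow> (\<exists>P. E = eval3 P)"
proof
  assume "poly3 E"
  then obtain n c where E: "\<And>s z w. E s z w = (\<Sum>i\<le>n. \<Sum>j\<le>n. \<Sum>k\<le>n. c i j k * s ^ i * z ^ j * w ^ k)"
    unfolding poly3_def by blast
  have "E = eval3 (\<Sum>i\<le>n. \<Sum>j\<le>n. \<Sum>k\<le>n.
      [:[:[:c i j k:]:]:] * [:0, 1:] ^ i * [:[:0, 1:]:] ^ j * [:[:[:0, 1:]:]:] ^ k)"
    by (intro ext) (simp only: E eval3_monomials)
  then show "\<exists>P. E = eval3 P" ..
next
  assume "\<exists>P. E = eval3 P"
  then show "poly3 E" using poly3_eval3 by blast
qed

lemma poly3_const: "poly3 (\<lambda>s z w. c)"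
  unfolding poly3_iff_eval3 by (rule exI[of _ "[:[:[:c:]:]:]"]) (simp add: eval3_def fun_eq_iff)

lemma poly3_s: "poly3 (\<lambda>s z w. s)"
  unfolding poly3_iff_eval3 by (rule exI[of _ "[:0, 1:]"]) (simp add: eval3_def fun_eq_iff)

lemma poly3_z: "poly3 (\<lambda>s z w. z)"
  unfolding poly3_iff_eval3 by (rule exI[of _ "[:[:0, 1:]:]"]) (simp add: eval3_def fun_eq_iff)

lemma poly3_w: "poly3 (\<lambda>s z w. w)"
  unfolding poly3_iff_eval3 by (rule exI[of _ "[:[:[:0, 1:]:]:]"]) (simp add: eval3_def fun_eq_iff)

lemma poly3_add:
  assumes "poly3 E" "poly3 F"
  shows "poly3 (\<lambda>s z w. E s z w + F s z w)"
proof -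
  from assms obtain P Q where "E = eval3 P" "F = eval3 Q" by (auto simp: poly3_iff_eval3)
  then show ?thesis
    unfolding poly3_iff_eval3 by (intro exI[of _ "P + Q"]) (simp add: eval3_def fun_eq_iff)
qed

lemma poly3_mult:
  assumes "poly3 E" "poly3 F"
  shows "poly3 (\<lambda>s z w. E s z w * F s z w)"
proof -
  from assms obtain P Q where "E = eval3 P" "F = eval3 Q" by (auto simp: poly3_iff_eval3)
  then show ?thesis
    unfolding poly3_iff_eval3 by (intro exI[of _ "P * Q"]) (simp add: eval3_def fun_eq_iff)
qed

lemma poly3_poly:
  assumes "poly3 E"
  shows "poly3 (\<lambda>s z w. poly r (E s z w))"
proof (induction r)
  case 0
  show ?case by (simp add: poly3_const)
next
  case (pCons a r)
  show ?case
    unfolding poly_pCons by (intro poly3_add poly3_mult poly3_const assms pCons.IH)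
qed

lemma poly3_funpow_poly: "poly3 (\<lambda>s z w. (poly q ^^ n) w)"
proof (induction n)
  case 0
  show ?case by (simp add: poly3_w)
next
  case (Suc n)
  show ?case unfolding funpow.simps comp_def by (rule poly3_poly[OF Suc.IH])
qed

lemma field_differentiable_funpow:
  fixes f :: "'a::real_normed_field \<Rightarrow> 'a"
  assumes "\<And>x. f field_differentiable at x"
  shows "(f ^^ n) field_differentiable at x"
  by (induction n arbitrary: x) (simp_all add: assms field_differentiable_compose field_differentiable_ident)

lemma deriv_funpow_add:
  fixes f :: "'a::real_normed_field \<Rightarrow> 'a"
  assumes "\<And>x. f field_differentiable at x"
  shows "deriv (f ^^ (a + b)) x = deriv (f ^^ b) ((f ^^ a) x) * deriv (f ^^ a) x"
proof -
  have "f ^^ (a + b) = (f ^^ b) \<circ> (f ^^ a)" by (subst add.commute) (rule funpow_add)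
  then show ?thesis by (simp add: deriv_chain field_differentiable_funpow assms)
qed

lemma funpow_add_apply: "(f ^^ a) ((f ^^ b) x) = (f ^^ (a + b)) x"
  by (simp add: funpow_add)

lemma funpow_mult_fixpoint: "(f ^^ m) x = x \<Longrightarrow> (f ^^ (m * k)) x = x"
  by (induction k) (simp_all add: funpow_add)

lemma deriv_funpow_mult_fixpoint:
  fixes f :: "'a::real_normed_field \<Rightarrow> 'a"
  assumes "\<And>x. f field_differentiable at x" and "(f ^^ m) x = x"
  shows "deriv (f ^^ (m * k)) x = deriv (f ^^ m) x ^ k"
proof (induction k)
  case (Suc k)
  have "deriv (f ^^ (m * k + m)) x = deriv (f ^^ m) x * deriv (f ^^ (m * k)) x"
    using deriv_funpow_add[OF assms(1)] funpow_mult_fixpoint[OF assms(2)] by metis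
  then show ?case using Suc by (simp add: add.commute)
qed simp

lemma sum_lessThan_mult:
  fixes m l :: nat
  shows "(\<Sum>n<m * l. g n) = (\<Sum>i<m. \<Sum>j<l. g (i + j * m))"
proof -
  have "(\<Sum>n<m * l. g n) = (\<Sum>j<l. \<Sum>n\<in>{j * m..<j * m + m}. g n)"
    using sum.nat_group[of g m l] by (simp add: mult.commute)
  also have "\<dots> = (\<Sum>j<l. \<Sum>i<m. g (i + j * m))"
  proof (rule sum.cong[OF refl])
    fix j
    show "(\<Sum>n\<in>{j * m..<j * m + m}. g n) = (\<Sum>i<m. g (i + j * m))"
      using sum.shift_bounds_nat_ivl[of g 0 "j * m" m] by (simp add: atLeast0LessThan add.commute)
  qed
  finally show ?thesis by (rule trans) (rule sum.swap)
qed

lemma sum_deriv_funpow_periodic: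
  fixes f :: "'a::real_normed_field \<Rightarrow> 'a"
  assumes diff: "\<And>x. f field_differentiable at x" and per: "(f ^^ m) x = x"
  shows "(\<Sum>n<m * l. deriv (f ^^ (m * l - n - 1)) ((f ^^ (n + 1)) x) * c n)
    = (\<Sum>i<m. deriv (f ^^ (m - i - 1)) ((f ^^ (i + 1)) x)
         * (\<Sum>k<l. deriv (f ^^ m) x ^ k * c (i + (l - 1 - k) * m)))"
proof -
  define \<rho> where "\<rho> = deriv (f ^^ m) x"
  define b where "b i = deriv (f ^^ (m - i - 1)) ((f ^^ (i + 1)) x)" for i
  have block: "deriv (f ^^ (m * l - (i + j * m) - 1)) ((f ^^ (i + j * m + 1)) x) = b i * \<rho> ^ (l - 1 - j)"
    if "i < m" "j < l" for i j
  proof -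
    obtain r where "l = Suc (j + r)" using \<open>j < l\<close> less_iff_Suc_add by blast
    then have "m * l - (i + j * m) - 1 = (m - i - 1) + m * (l - 1 - j)"
      using \<open>i < m\<close> by (simp add: algebra_simps)
    moreover have "(f ^^ (i + j * m + 1)) x = (f ^^ (i + 1)) x"
      using funpow_mult_fixpoint[OF per, of j] by (simp add: funpow_add mult.commute)
    moreover have "(f ^^ (m - i - 1)) ((f ^^ (i + 1)) x) = x"
      unfolding funpow_add_apply using per \<open>i < m\<close> by simp
    ultimately show ?thesis
      by (simp add: deriv_funpow_add[OF diff] deriv_funpow_mult_fixpoint[OF diff per] b_def \<rho>_def)
  qed
  have "(\<Sum>n<m * l. deriv (f ^^ (m * l - n - 1)) ((f ^^ (n + 1)) x) * c n)
      = (\<Sum>i<m. \<Sum>j<l. b i * (\<rho> ^ (l - 1 - j) * c (i + j * m)))"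
    unfolding sum_lessThan_mult by (intro sum.cong refl) (metis block lessThan_iff mult.assoc)
  also have "\<dots> = (\<Sum>i<m. b i * (\<Sum>k<l. \<rho> ^ k * c (i + (l - 1 - k) * m)))"
  proof (intro sum.cong refl)
    fix i
    have "(\<Sum>j<l. \<rho> ^ (l - 1 - j) * c (i + j * m))
        = (\<Sum>k<l. \<rho> ^ (l - 1 - (l - Suc k)) * c (i + (l - Suc k) * m))"
      by (rule sum.nat_diff_reindex[symmetric])
    also have "\<dots> = (\<Sum>k<l. \<rho> ^ k * c (i + (l - 1 - k) * m))"
      by (intro sum.cong refl) (auto simp: Suc_diff_Suc)
    finally show "(\<Sum>j<l. b i * (\<rho> ^ (l - 1 - j) * c (i + j * m)))
        = b i * (\<Sum>k<l. \<rho> ^ k * c (i + (l - 1 - k) * m))"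
      by (simp only: sum_distrib_left[symmetric])
  qed
  finally show ?thesis by (simp add: b_def \<rho>_def)
qed

lemma linear_recurrence_along_orbit:
  fixes f :: "'a::real_normed_field \<Rightarrow> 'a"
  assumes diff: "\<And>x. f field_differentiable at x"
    and rec: "\<And>n. A (Suc n) = deriv f ((f ^^ n) x) * A n + c n"
  shows "A n = deriv (f ^^ n) x * A 0 + (\<Sum>k<n. deriv (f ^^ (n - k - 1)) ((f ^^ (k + 1)) x) * c k)"
proof (induction n)
  case (Suc n)
  have step: "deriv (f ^^ Suc a) y = deriv f ((f ^^ a) y) * deriv (f ^^ a) y" for a y
    using deriv_funpow_add[OF diff, of a 1 y] by simp
  have "deriv (f ^^ (Suc n - k - 1)) ((f ^^ (k + 1)) x)
      = deriv f ((f ^^ n) x) * deriv (f ^^ (n - k - 1)) ((f ^^ (k + 1)) x)" if "k < n" for k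
  proof -
    have "(f ^^ (n - k - 1)) ((f ^^ (k + 1)) x) = (f ^^ n) x"
      unfolding funpow_add_apply using that by simp
    with step[of "n - k - 1" "(f ^^ (k + 1)) x"] that show ?thesis
      by (simp add: Suc_diff_Suc)
  qed
  then have "(\<Sum>k<Suc n. deriv (f ^^ (Suc n - k - 1)) ((f ^^ (k + 1)) x) * c k)
      = deriv f ((f ^^ n) x) * (\<Sum>k<n. deriv (f ^^ (n - k - 1)) ((f ^^ (k + 1)) x) * c k) + c n"
    by (simp add: sum_distrib_left mult.assoc)
  then show ?case
    by (simp del: funpow.simps add: rec Suc.IH step algebra_simps)
qed simp

lemma poly_second_order_expansion:
  fixes p :: "'a::idom poly"
  shows "\<exists>r. \<forall>h. poly p (a + h) = poly p a + poly (pderiv p) a * h + h\<^sup>2 * poly r h"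
proof (induction p)
  case 0
  show ?case by (intro exI[of _ 0]) simp
next
  case (pCons c p)
  then obtain r where r: "\<And>h. poly p (a + h) = poly p a + poly (pderiv p) a * h + h\<^sup>2 * poly r h"
    by blast
  have "poly (pCons c p) (a + h) = poly (pCons c p) a + poly (pderiv (pCons c p)) a * h
      + h\<^sup>2 * poly ([:poly (pderiv p) a:] + [:a, 1:] * r) h" for h
  proof -
    have "poly (pCons c p) (a + h) = c + (a + h) * (poly p a + poly (pderiv p) a * h + h\<^sup>2 * poly r h)"
      by (simp only: poly_pCons r)
    then show ?thesis by (simp add: pderiv_pCons power2_eq_square algebra_simps)
  qed
  then show ?case by blast
qed

lemma deriv_poly: "deriv (poly p) x = poly (pderiv p) x"
  by (rule DERIV_imp_deriv) (rule poly_DERIV)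

lemma field_differentiable_poly: "poly p field_differentiable at x"
  unfolding field_differentiable_def by (rule exI) (rule poly_DERIV)

fun linear_term :: "complex poly \<Rightarrow> complex poly \<Rightarrow> complex \<Rightarrow> nat \<Rightarrow> complex \<Rightarrow> complex \<Rightarrow> complex" where
  "linear_term p q eps 0 z w = z"
| "linear_term p q eps (Suc n) z w
     = deriv (poly p) ((poly p ^^ n) 0) * linear_term p q eps n z w + eps * (poly q ^^ n) w"

lemma linear_term_eq:
  "linear_term p q eps n z w = deriv (poly p ^^ n) 0 * z
     + eps * (\<Sum>k<n. deriv (poly p ^^ (n - k - 1)) ((poly p ^^ (k + 1)) 0) * (poly q ^^ k) w)"
  using linear_recurrence_along_orbit[OF field_differentiable_poly,
      where A = "\<lambda>n. linear_term p q eps n z w" and x = 0 and c = "\<lambda>k. eps * (poly q ^^ k) w"]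
  by (simp add: sum_distrib_left mult_ac)

lemma poly3_linear_term: "poly3 (\<lambda>s z w. linear_term p q eps n z w)"
proof (induction n)
  case 0
  show ?case by (simp add: poly3_z)
next
  case (Suc n)
  show ?case
    unfolding linear_term.simps by (intro poly3_add poly3_mult poly3_const poly3_funpow_poly Suc)
qed

lemma snd_funpow_fmap: "snd ((fmap p q eps s ^^ n) (z, w)) = (poly q ^^ n) w"
  by (induction n) (simp_all add: fmap_def case_prod_beta)

lemma fst_funpow_fmap_Suc:
  "fst ((fmap p q eps s ^^ Suc n) (z, w))
     = poly p (fst ((fmap p q eps s ^^ n) (z, w))) + s * eps * (poly q ^^ n) w"
  using snd_funpow_fmap[where n = n] by (simp add: fmap_def case_prod_beta)

lemma fst_funpow_fmap_expansion:
  "\<exists>R. poly3 R \<and> (\<forall>s z w. fst ((fmap p q eps s ^^ n) (s * z, w))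
     = (poly p ^^ n) 0 + s * linear_term p q eps n z w + s\<^sup>2 * R s z w)"
proof (induction n)
  case 0
  show ?case by (intro exI[of _ "\<lambda>s z w. 0"]) (simp add: poly3_const)
next
  case (Suc n)
  then obtain R where "poly3 R" and R: "\<And>s z w. fst ((fmap p q eps s ^^ n) (s * z, w))
     = (poly p ^^ n) 0 + s * linear_term p q eps n z w + s\<^sup>2 * R s z w"
    by blast
  define a where "a = (poly p ^^ n) 0"
  obtain r where r: "\<And>h. poly p (a + h) = poly p a + poly (pderiv p) a * h + h\<^sup>2 * poly r h"
    using poly_second_order_expansion by blast
  define A where "A s z w = linear_term p q eps n z w + s * R s z w" for s z w
  define R' where "R' s z w = poly (pderiv p) a * R s z w + (A s z w)\<^sup>2 * poly r (s * A s z w)"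
    for s z w
  have "poly3 R'"
    unfolding R'_def A_def power2_eq_square
    by (intro poly3_add poly3_mult poly3_const poly3_poly poly3_linear_term poly3_s \<open>poly3 R\<close>)
  moreover have "fst ((fmap p q eps s ^^ Suc n) (s * z, w))
      = (poly p ^^ Suc n) 0 + s * linear_term p q eps (Suc n) z w + s\<^sup>2 * R' s z w" for s z w
  proof -
    have "fst ((fmap p q eps s ^^ Suc n) (s * z, w)) = poly p (a + s * A s z w) + s * eps * (poly q ^^ n) w"
      unfolding fst_funpow_fmap_Suc R by (simp add: a_def A_def power2_eq_square algebra_simps)
    also have "\<dots> = (poly p ^^ Suc n) 0 + s * linear_term p q eps (Suc n) z w + s\<^sup>2 * R' s z w"
      unfolding r R'_def by (simp add: A_def a_def deriv_poly power2_eq_square algebra_simps)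
    finally show ?thesis .
  qed
  ultimately show ?case by blast
qed

lemma funpow_gmap:
  assumes "s \<noteq> 0"
  shows "(gmap p q eps s ^^ n) (z, w) = (fst ((fmap p q eps s ^^ n) (s * z, w)) / s, (poly q ^^ n) w)"
proof -
  have phi_phi_inv: "phi s (phi_inv s x) = x" for x
    using assms by (simp add: phi_def phi_inv_def case_prod_beta)
  have "(gmap p q eps s ^^ n) x = phi_inv s ((fmap p q eps s ^^ n) (phi s x))" for x
  proof (induction n)
    case 0
    show ?case using assms by (simp add: phi_def phi_inv_def case_prod_beta)
  next
    case (Suc n)
    then show ?case by (simp add: gmap_def phi_phi_inv)
  qed
  then show ?thesis by (simp add: phi_def phi_inv_def case_prod_beta snd_funpow_fmap)
qed

lemma funpow_gmap_expansion:
  assumes "(poly p ^^ n) 0 = 0"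
  shows "\<exists>R. poly3 R \<and> (\<forall>s z w. s \<noteq> 0 \<longrightarrow>
    (gmap p q eps s ^^ n) (z, w) = (linear_term p q eps n z w + s * R s z w, (poly q ^^ n) w))"
proof -
  obtain R where "poly3 R" and R: "\<And>s z w. fst ((fmap p q eps s ^^ n) (s * z, w))
     = (poly p ^^ n) 0 + s * linear_term p q eps n z w + s\<^sup>2 * R s z w"
    using fst_funpow_fmap_expansion by blast
  have "(gmap p q eps s ^^ n) (z, w) = (linear_term p q eps n z w + s * R s z w, (poly q ^^ n) w)"
    if "s \<noteq> 0" for s z w
    using that by (simp add: funpow_gmap R assms power2_eq_square field_simps)
  with \<open>poly3 R\<close> show ?thesis by blast
qed

theorem proposition4p2:
  fixes p q :: "complex poly" and m0 t0 :: nat and eps :: complex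
  assumes "degree p \<ge> 2"
    and "m0 \<ge> 1"
    and "(poly p ^^ m0) 0 = 0"
    and "\<And>j. 0 < j \<Longrightarrow> j < m0 \<Longrightarrow> (poly p ^^ j) 0 \<noteq> 0"
    and "t0 \<ge> 1"
    and "eps \<noteq> 0"
  shows "\<forall>l::nat. l \<ge> 1 \<longrightarrow>
    (\<exists>E. poly3 E \<and>
      (\<forall>s z w. s \<noteq> 0 \<and> norm s < 1 \<longrightarrow>
        (gmap p q eps s ^^ (m0 * t0 * l)) (z, w) =
          ((deriv (poly p ^^ m0) 0) ^ (t0 * l) * z
             + eps * (\<Sum>i<m0 * t0.
                 deriv (poly p ^^ (m0 * t0 - i - 1)) ((poly p ^^ (i + 1)) 0)
                 * (\<Sum>k<l. (deriv (poly p ^^ m0) 0) ^ (t0 * k)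
                     * (poly q ^^ (i + (l - 1 - k) * (m0 * t0))) w))
             + s * E s z w,
           (poly q ^^ (m0 * t0 * l)) w)))" (is "\<forall>l. _ \<longrightarrow> ?claim l")
proof (intro allI impI)
  fix l :: nat
  note per = \<open>(poly p ^^ m0) 0 = 0\<close>
  have per1: "(poly p ^^ (m0 * t0)) 0 = 0"
    using funpow_mult_fixpoint[OF per] .
  obtain R where "poly3 R" and R: "\<forall>s z w. s \<noteq> 0 \<longrightarrow> (gmap p q eps s ^^ (m0 * t0 * l)) (z, w)
      = (linear_term p q eps (m0 * t0 * l) z w + s * R s z w, (poly q ^^ (m0 * t0 * l)) w)"
    using funpow_gmap_expansion[OF funpow_mult_fixpoint[OF per1]] by blast
  have "linear_term p q eps (m0 * t0 * l) z w
      = (deriv (poly p ^^ m0) 0) ^ (t0 * l) * z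
        + eps * (\<Sum>i<m0 * t0.
            deriv (poly p ^^ (m0 * t0 - i - 1)) ((poly p ^^ (i + 1)) 0)
            * (\<Sum>k<l. (deriv (poly p ^^ m0) 0) ^ (t0 * k)
                * (poly q ^^ (i + (l - 1 - k) * (m0 * t0))) w))" for z w
    unfolding linear_term_eq sum_deriv_funpow_periodic[OF field_differentiable_poly per1]
    by (simp only: deriv_funpow_mult_fixpoint[OF field_differentiable_poly per] mult.assoc power_mult)
  with \<open>poly3 R\<close> R show "?claim l" by auto
qed

end
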